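(* Let $X,Y$ be metric spaces, $X\times Y$ with the maximum metric, $\Delta$ a scale and $g,h$ Hausdorff functions. For any set $E\subseteq X\times Y$, $$\mathcal P^{gh}_{\Delta,0}(E)\ge\mathcal P^{h}_{\Delta}(X)\cdot\inf_{x\in X}\underline{\mathcal B}^{g}_0(E_x).$$
   Context: In a metric space $(X,d)$: $\operatorname{gap}F=\inf\{d(x,y):x,y\in F,x\neq y\}$, $C_\delta(E)=\sup\{|F|:F\subseteq E,\operatorname{gap}F>\delta\}$. A Hausdorff function is a nondecreasing $g:(0,\infty)\to(0,\infty)$; $gh$ is the pointwise product. A scale is a set $\Delta\subseteq(0,\infty)$ with $0$ in its closure. A packing is a family $\pi=\{(x_i,r_i):i\in I\}\subseteq X\times(0,\infty)$ with $d(x_i,x_j)>r_i$ for $i\ne j$; it is a packing of $E$ if all $x_i\in E$, $\Delta$-valued if all $r_i\in\Delta$, $\delta$-fine if all $r_i\le\delta$; $g(\pi)=\sum_ig(r_i)$. $\mathcal P^g_{\Delta,0}(E)=\inf_{\delta>0}\sup\{g(\pi):\pi$ a $\Delta$-valued $\delta$-fine packing of $E\}$; $\mathcal P^g_\Delta(E)=\inf\{\sum_n\mathcal P^g_{\Delta,0}(E_n):E\subseteq\bigcup_nE_n\}$ (countable covers); $\underline{\mathcal B}^g_0(E)=\liminf_{\delta\to0}C_\delta(E)g(\delta)$. $E_x=\{y\in Y:(x,y)\in E\}$. *)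

theory Defs
  imports "HOL-Analysis.Analysis"
begin

definition max_dist :: "('a \<Rightarrow> 'a \<Rightarrow> real) \<Rightarrow> ('b \<Rightarrow> 'b \<Rightarrow> real) \<Rightarrow> ('a \<times> 'b) \<Rightarrow> ('a \<times> 'b) \<Rightarrow> real" where
  "max_dist d1 d2 = (\<lambda>(x,y) (x',y'). max (d1 x x') (d2 y y'))"

definition hausdorff_function :: "(real \<Rightarrow> real) \<Rightarrow> bool" where
  "hausdorff_function g \<longleftrightarrow> mono_on {0<..} g \<and> (\<forall>t>0. g t > 0)"

definition scale :: "real set \<Rightarrow> bool" where
  "scale D \<longleftrightarrow> D \<subseteq> {0<..} \<and> 0 \<in> closure D"

definition gap :: "('a \<Rightarrow> 'a \<Rightarrow> real) \<Rightarrow> 'a set \<Rightarrow> ereal" where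
  "gap d F = (INF p \<in> {(x,y). x \<in> F \<and> y \<in> F \<and> x \<noteq> y}. ereal (d (fst p) (snd p)))"

definition capacity :: "('a \<Rightarrow> 'a \<Rightarrow> real) \<Rightarrow> real \<Rightarrow> 'a set \<Rightarrow> ennreal" where
  "capacity d \<delta> E = (SUP F \<in> {F. F \<subseteq> E \<and> gap d F > ereal \<delta>}.
      (if finite F then of_nat (card F) else \<infinity>))"

definition lower_box :: "('a \<Rightarrow> 'a \<Rightarrow> real) \<Rightarrow> (real \<Rightarrow> real) \<Rightarrow> 'a set \<Rightarrow> ennreal" where
  "lower_box d g E = Liminf (at_right 0) (\<lambda>\<delta>. capacity d \<delta> E * ennreal (g \<delta>))"

text \<open>A packing: a family of (centre, radius) pairs with positive radii and
  d(x_i,x_j) > r_i for distinct members (represented as a set of pairs; repeated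
  pairs are impossible anyway).\<close>
definition packing :: "'a set \<Rightarrow> ('a \<Rightarrow> 'a \<Rightarrow> real) \<Rightarrow> ('a \<times> real) set \<Rightarrow> bool" where
  "packing M d \<pi> \<longleftrightarrow> (\<forall>p\<in>\<pi>. fst p \<in> M \<and> snd p > 0) \<and>
     (\<forall>p\<in>\<pi>. \<forall>q\<in>\<pi>. p \<noteq> q \<longrightarrow> d (fst p) (fst q) > snd p)"

definition packing_sum :: "(real \<Rightarrow> real) \<Rightarrow> ('a \<times> real) set \<Rightarrow> ennreal" where
  "packing_sum g \<pi> = (\<Sum>\<^sub>\<infinity> p\<in>\<pi>. ennreal (g (snd p)))"

definition packing_premeasure ::
  "'a set \<Rightarrow> ('a \<Rightarrow> 'a \<Rightarrow> real) \<Rightarrow> (real \<Rightarrow> real) \<Rightarrow> real set \<Rightarrow> 'a set \<Rightarrow> ennreal" where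
  "packing_premeasure M d g D E =
     (INF \<delta> \<in> {0<..}. SUP \<pi> \<in> {\<pi>. packing M d \<pi> \<and> fst ` \<pi> \<subseteq> E \<and> snd ` \<pi> \<subseteq> D
                                   \<and> (\<forall>p\<in>\<pi>. snd p \<le> \<delta>)}. packing_sum g \<pi>)"

definition packing_measure ::
  "'a set \<Rightarrow> ('a \<Rightarrow> 'a \<Rightarrow> real) \<Rightarrow> (real \<Rightarrow> real) \<Rightarrow> real set \<Rightarrow> 'a set \<Rightarrow> ennreal" where
  "packing_measure M d g D E =
     (INF A \<in> {A :: nat \<Rightarrow> 'a set. (\<forall>n. A n \<subseteq> M) \<and> E \<subseteq> (\<Union>n. A n)}.
        (\<Sum>n. packing_premeasure M d g D (A n)))"

definition fiber :: "('a \<times> 'b) set \<Rightarrow> 'a \<Rightarrow> 'b set" where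
  "fiber E x = {y. (x, y) \<in> E}"

end

theory Submission
  imports Defs
begin

text \<open>
  Fix \<open>c\<close> below the infimum of the lower box contents of the fibres and let \<open>X\<^sub>n\<close> consist of
  the \<open>x\<close> whose fibre \<open>E\<^sub>x\<close> contains, at every scale \<open>t \<le> 1/(n+1)\<close>, a set of gap \<open>> t\<close> with
  more than \<open>c / g t\<close> points; the \<open>X\<^sub>n\<close> increase to \<open>X\<close>. Replacing each pair \<open>(x, r)\<close> of a fine
  packing of \<open>X\<^sub>n\<close> by the pairs \<open>((x, y), r)\<close>, with \<open>y\<close> running through such a set in \<open>E\<^sub>x\<close>,
  yields a packing of \<open>E\<close> for the maximum metric, so \<open>c\<close> times the \<open>h\<close>-premeasure of \<open>X\<^sub>n\<close>
  is at most the \<open>gh\<close>-premeasure of \<open>E\<close>. It remains to bound the packing measure of \<open>X\<close> by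
  the supremum of the premeasures of the \<open>X\<^sub>n\<close>: the premeasure does not grow under closure,
  and the packing measure is a metric outer measure, so closed sets are Caratheodory
  measurable and the measure is continuous along the increasing closures.
\<close>

section \<open>Fine packings and the packing measure\<close>

definition fine_packings ::
  "'a set \<Rightarrow> ('a \<Rightarrow> 'a \<Rightarrow> real) \<Rightarrow> real set \<Rightarrow> real \<Rightarrow> 'a set \<Rightarrow> ('a \<times> real) set set" where
  "fine_packings M d D \<delta> E =
     {\<pi>. packing M d \<pi> \<and> fst ` \<pi> \<subseteq> E \<and> snd ` \<pi> \<subseteq> D \<and> (\<forall>p\<in>\<pi>. snd p \<le> \<delta>)}"

definition fine_packing_sup ::
  "'a set \<Rightarrow> ('a \<Rightarrow> 'a \<Rightarrow> real) \<Rightarrow> (real \<Rightarrow> real) \<Rightarrow> real set \<Rightarrow> real \<Rightarrow> 'a set \<Rightarrow> ennreal" where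
  "fine_packing_sup M d g D \<delta> E = (SUP \<pi> \<in> fine_packings M d D \<delta> E. packing_sum g \<pi>)"

lemma packing_premeasure_eq_INF_fine_packing_sup:
  "packing_premeasure M d g D E = (INF \<delta> \<in> {0<..}. fine_packing_sup M d g D \<delta> E)"
  unfolding packing_premeasure_def fine_packing_sup_def fine_packings_def ..

lemma empty_in_fine_packings: "{} \<in> fine_packings M d D \<delta> E"
  by (simp add: fine_packings_def packing_def)

lemma fine_packingsD:
  assumes "\<pi> \<in> fine_packings M d D \<delta> E" "p \<in> \<pi>"
  shows "fst p \<in> M" "fst p \<in> E" "0 < snd p" "snd p \<in> D" "snd p \<le> \<delta>"
  using assms by (auto simp: fine_packings_def packing_def)

lemma fine_packings_packing: "\<pi> \<in> fine_packings M d D \<delta> E \<Longrightarrow> packing M d \<pi>"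
  by (simp add: fine_packings_def)

lemma packing_subset: "packing M d \<pi> \<Longrightarrow> \<pi>' \<subseteq> \<pi> \<Longrightarrow> packing M d \<pi>'"
  unfolding packing_def by (meson subsetD)

lemma fine_packings_subset:
  "\<pi> \<in> fine_packings M d D \<delta> E \<Longrightarrow> \<pi>' \<subseteq> \<pi> \<Longrightarrow> \<pi>' \<in> fine_packings M d D \<delta> E"
  unfolding fine_packings_def by (auto intro: packing_subset)

lemma fine_packings_mono:
  "A \<subseteq> B \<Longrightarrow> \<delta> \<le> \<delta>' \<Longrightarrow> fine_packings M d D \<delta> A \<subseteq> fine_packings M d D \<delta>' B"
  unfolding fine_packings_def by fastforce

lemma fine_packing_sup_mono:
  "A \<subseteq> B \<Longrightarrow> \<delta> \<le> \<delta>' \<Longrightarrow> fine_packing_sup M d g D \<delta> A \<le> fine_packing_sup M d g D \<delta>' B"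
  unfolding fine_packing_sup_def by (rule SUP_subset_mono[OF fine_packings_mono]) auto

lemma packing_sum_le_fine_packing_sup:
  "\<pi> \<in> fine_packings M d D \<delta> E \<Longrightarrow> packing_sum g \<pi> \<le> fine_packing_sup M d g D \<delta> E"
  unfolding fine_packing_sup_def by (rule SUP_upper)

lemma packing_premeasure_le_fine_packing_sup:
  "0 < \<delta> \<Longrightarrow> packing_premeasure M d g D E \<le> fine_packing_sup M d g D \<delta> E"
  unfolding packing_premeasure_eq_INF_fine_packing_sup by (rule INF_lower) simp

lemma packing_premeasure_geI:
  assumes "0 < \<eta>" and "\<And>\<delta>. 0 < \<delta> \<Longrightarrow> \<delta> < \<eta> \<Longrightarrow> z \<le> fine_packing_sup M d g D \<delta> E"
  shows "z \<le> packing_premeasure M d g D E"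
  unfolding packing_premeasure_eq_INF_fine_packing_sup
proof (rule INF_greatest)
  fix \<delta> :: real assume "\<delta> \<in> {0<..}"
  then have "z \<le> fine_packing_sup M d g D (min \<delta> (\<eta>/2)) E" using assms by auto
  also have "\<dots> \<le> fine_packing_sup M d g D \<delta> E" by (rule fine_packing_sup_mono) auto
  finally show "z \<le> fine_packing_sup M d g D \<delta> E" .
qed

lemma packing_premeasure_mono:
  "A \<subseteq> B \<Longrightarrow> packing_premeasure M d g D A \<le> packing_premeasure M d g D B"
  unfolding packing_premeasure_eq_INF_fine_packing_sup by (rule INF_mono) (auto intro: fine_packing_sup_mono)

lemma packing_premeasure_empty [simp]: "packing_premeasure M d g D {} = 0"
proof -
  have "fine_packings M d D 1 {} = {{}}"
    using empty_in_fine_packings by (auto simp: fine_packings_def)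
  then have "fine_packing_sup M d g D 1 {} = 0"
    by (simp add: fine_packing_sup_def packing_sum_def)
  then show ?thesis using packing_premeasure_le_fine_packing_sup[of 1 M d g D "{}"] by simp
qed

lemma packing_measure_le_premeasure:
  assumes "E \<subseteq> M"
  shows "packing_measure M d g D E \<le> packing_premeasure M d g D E"
proof -
  define A where "A n = (if n = 0 then E else {})" for n :: nat
  have "packing_measure M d g D E \<le> (\<Sum>n. packing_premeasure M d g D (A n))"
    unfolding packing_measure_def by (rule INF_lower) (use assms in \<open>auto simp: A_def\<close>)
  also have "\<dots> = packing_premeasure M d g D E"
    by (subst suminf_finite[of "{0}"]) (auto simp: A_def)
  finally show ?thesis .
qed

lemma packing_measure_mono:
  "A \<subseteq> B \<Longrightarrow> packing_measure M d g D A \<le> packing_measure M d g D B"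
  unfolding packing_measure_def by (rule INF_mono) blast

lemma packing_measure_empty [simp]: "packing_measure M d g D {} = 0"
  using packing_measure_le_premeasure[of "{}" M d g D] by simp

lemma packing_sum_Un_disjoint:
  "A \<inter> B = {} \<Longrightarrow> packing_sum g (A \<union> B) = packing_sum g A + packing_sum g B"
  unfolding packing_sum_def by (rule infsum_Un_disjoint) (auto intro: nonneg_summable_on_complete)

lemma mult_packing_sum_leI:
  assumes "\<And>F. finite F \<Longrightarrow> F \<subseteq> \<pi> \<Longrightarrow> c * (\<Sum>p\<in>F. ennreal (g (snd p))) \<le> z"
  shows "c * packing_sum g \<pi> \<le> z"
proof -
  have "c * packing_sum g \<pi> = (SUP F\<in>{F. finite F \<and> F \<subseteq> \<pi>}. c * (\<Sum>p\<in>F. ennreal (g (snd p))))"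
    unfolding packing_sum_def by (subst nonneg_infsum_complete) (simp_all add: SUP_mult_left_ennreal)
  also have "\<dots> \<le> z" using assms by (auto intro: SUP_least)
  finally show ?thesis .
qed

lemma suminf_half_powers_ennreal: "0 \<le> e \<Longrightarrow> (\<Sum>n. ennreal (e * (1/2)^Suc n)) = ennreal e"
proof -
  assume "0 \<le> e"
  have s: "(\<lambda>n. e * (1/2::real)^Suc n) sums e"
    using sums_mult[OF power_half_series, of e] by simp
  then have "(\<Sum>n. ennreal (e * (1/2)^Suc n)) = ennreal (\<Sum>n. e * (1/2)^Suc n)"
    using \<open>0 \<le> e\<close> by (intro suminf_ennreal2) (auto simp: sums_iff)
  also have "\<dots> = ennreal e" using s by (simp add: sums_iff)
  finally show ?thesis .
qed

lemma packing_measure_countably_subadditive: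
  assumes "\<And>n. B n \<subseteq> M"
  shows "packing_measure M d g D (\<Union>n. B n) \<le> (\<Sum>n. packing_measure M d g D (B n))"
proof (rule ennreal_le_epsilon)
  fix e :: real assume fin: "(\<Sum>n. packing_measure M d g D (B n)) < top" and "0 < e"
  let ?P = "packing_measure M d g D" and ?Q = "packing_premeasure M d g D"
  have "\<exists>C. (\<forall>k. C k \<subseteq> M) \<and> B n \<subseteq> (\<Union>k. C k) \<and>
          (\<Sum>k. ?Q (C k)) < ?P (B n) + ennreal (e * (1/2)^Suc n)" for n
  proof -
    have "?P (B n) < top" using ennreal_suminf_lessD[OF fin] .
    then have "?P (B n) < ?P (B n) + ennreal (e * (1/2)^Suc n)"
      using ennreal_add_left_cancel_less[of "?P (B n)" 0] \<open>0 < e\<close> by simp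
    then show ?thesis unfolding packing_measure_def[of M d g D "B n"] INF_less_iff by auto
  qed
  then obtain C where C: "\<And>n k. C n k \<subseteq> M" "\<And>n. B n \<subseteq> (\<Union>k. C n k)"
    "\<And>n. (\<Sum>k. ?Q (C n k)) < ?P (B n) + ennreal (e * (1/2)^Suc n)"
    by metis
  define C' where "C' m = (case prod_decode m of (n, k) \<Rightarrow> C n k)" for m
  have "?P (\<Union>n. B n) \<le> (\<Sum>m. ?Q (C' m))"
    unfolding packing_measure_def
  proof (rule INF_lower, safe)
    fix x m assume "x \<in> C' m" then show "x \<in> M" using C(1) by (auto simp: C'_def split: prod.splits)
  next
    fix x n assume "x \<in> B n"
    then obtain k where "x \<in> C n k" using C(2) by blast
    then have "x \<in> C' (prod_encode (n, k))" by (simp add: C'_def)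
    then show "x \<in> (\<Union>m. C' m)" by blast
  qed
  also have "(\<Sum>m. ?Q (C' m)) = (\<Sum>n. \<Sum>k. ?Q (C n k))"
    using suminf_ennreal_2dimen[of "\<lambda>n. \<Sum>k. ?Q (C n k)" "\<lambda>(n, k). ?Q (C n k)"]
    by (simp add: C'_def split_beta)
  also have "\<dots> \<le> (\<Sum>n. ?P (B n) + ennreal (e * (1/2)^Suc n))"
    by (intro suminf_le allI less_imp_le C(3)) auto
  also have "\<dots> = (\<Sum>n. ?P (B n)) + (\<Sum>n. ennreal (e * (1/2)^Suc n))"
    by (rule suminf_add[symmetric]) auto
  also have "\<dots> = (\<Sum>n. ?P (B n)) + ennreal e"
    using \<open>0 < e\<close> by (subst suminf_half_powers_ennreal) auto
  finally show "?P (\<Union>n. B n) \<le> (\<Sum>n. ?P (B n)) + ennreal e" .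
qed

lemma packing_measure_subadditive:
  assumes "A \<subseteq> M" "B \<subseteq> M"
  shows "packing_measure M d g D (A \<union> B) \<le> packing_measure M d g D A + packing_measure M d g D B"
proof -
  define F where "F n = (if n = 0 then A else if n = 1 then B else {})" for n :: nat
  have "A \<union> B = (\<Union>n. F n)" by (auto simp: F_def split: if_splits)
  then have "packing_measure M d g D (A \<union> B) \<le> (\<Sum>n. packing_measure M d g D (F n))"
    using packing_measure_countably_subadditive[of F M d g D] assms by (simp add: F_def)
  also have "\<dots> = (\<Sum>n\<in>{0,1}. packing_measure M d g D (F n))"
    by (rule suminf_finite) (auto simp: F_def)
  finally show ?thesis by (simp add: F_def)
qed

section \<open>Separated sets and closed sets in a metric space\<close>

lemma SUP_add_SUP_le_ennreal:
  fixes f g :: "_ \<Rightarrow> ennreal"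
  assumes "I \<noteq> {}" "J \<noteq> {}" "\<And>i j. i \<in> I \<Longrightarrow> j \<in> J \<Longrightarrow> f i + g j \<le> z"
  shows "(SUP i\<in>I. f i) + (SUP j\<in>J. g j) \<le> z"
proof -
  have "(SUP i\<in>I. f i) + (SUP j\<in>J. g j) = (SUP j\<in>J. SUP i\<in>I. f i + g j)"
    using assms(1,2) by (simp add: ennreal_SUP_add_left[symmetric] ennreal_SUP_add_right)
  also have "\<dots> \<le> z" using assms(3) by (auto intro: SUP_least)
  finally show ?thesis .
qed

lemma ennreal_suminf_tail_le:
  fixes f :: "nat \<Rightarrow> ennreal"
  assumes "(\<Sum>k. f k) < top" "0 < e"
  shows "\<exists>N. (\<Sum>k. f (k + N)) \<le> ennreal e"
proof (rule ccontr)
  let ?S = "\<Sum>k. f k"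
  assume "\<nexists>N. (\<Sum>k. f (k + N)) \<le> ennreal e"
  then have tail: "ennreal e < (\<Sum>k. f (k + N))" for N by (simp add: not_le)
  have "(\<Sum>k<N. f k) + ennreal e \<le> ?S" for N
  proof -
    have "?S = (\<Sum>k. f (k + N)) + (\<Sum>k<N. f k)" by (rule suminf_offset) simp
    then show ?thesis using tail[of N] by (simp add: add.commute add_left_mono less_imp_le)
  qed
  then have "(SUP N. \<Sum>k<N. f k) + ennreal e \<le> ?S"
    by (subst ennreal_SUP_add_left[symmetric]) (auto intro: SUP_least)
  then have "?S + ennreal e \<le> ?S" by (simp add: suminf_eq_SUP)
  then show False using assms by (cases ?S) (auto simp flip: ennreal_plus)
qed

lemma subset_Un_Diff_steps:
  "N \<le> m \<Longrightarrow> A m \<subseteq> A N \<union> (\<Union>k\<in>{N..<m}. A (Suc k) - A k)"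
proof (induction m rule: dec_induct)
  case (step m)
  then show ?case by (auto simp: atLeastLessThanSuc)
qed simp

lemma inverse_Suc_sq_le_diff:
  fixes i j :: nat
  assumes "i + 2 \<le> j"
  shows "1 / (real (Suc j))\<^sup>2 \<le> 1 / real (Suc (Suc i)) - 1 / real (Suc j)"
proof -
  have "1 / real j \<le> 1 / real (Suc (Suc i))" using assms by (intro divide_left_mono) auto
  moreover have "1 / (real (Suc j))\<^sup>2 \<le> 1 / (real j * real (Suc j))"
    using assms by (intro divide_left_mono) (auto simp: power2_eq_square)
  moreover have "1 / real j - 1 / real (Suc j) = 1 / (real j * real (Suc j))"
    using assms by (simp add: field_simps)
  ultimately show ?thesis by linarith
qed

lemma finite_positive_margin:
  fixes f :: "'a \<Rightarrow> 'a \<Rightarrow> real"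
  assumes "finite F" "\<And>p q. p \<in> F \<Longrightarrow> q \<in> F \<Longrightarrow> p \<noteq> q \<Longrightarrow> 0 < f p q"
  obtains m where "0 < m" "\<And>p q. p \<in> F \<Longrightarrow> q \<in> F \<Longrightarrow> p \<noteq> q \<Longrightarrow> m \<le> f p q"
proof -
  define S where "S = insert 1 ((\<lambda>(p, q). f p q) ` (F \<times> F - Id))"
  have "finite S" using assms(1) by (simp add: S_def)
  moreover have "0 < Min S"
    using \<open>finite S\<close> assms(2) by (subst Min_gr_iff) (auto simp: S_def)
  moreover have "f p q \<in> S" if "p \<in> F" "q \<in> F" "p \<noteq> q" for p q
    using that by (force simp: S_def)
  ultimately show thesis by (intro that[of "Min S"]) auto
qed

definition far_part :: "('a \<Rightarrow> 'a \<Rightarrow> real) \<Rightarrow> 'a set \<Rightarrow> 'a set \<Rightarrow> nat \<Rightarrow> 'a set" where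
  "far_part d C T k = {x \<in> T - C. \<forall>c\<in>C. 1 / real (Suc k) \<le> d x c}"

context Metric_space
begin

lemma packing_Un_separated:
  assumes "\<pi>\<^sub>1 \<in> fine_packings M d D \<delta> A" "\<pi>\<^sub>2 \<in> fine_packings M d D \<delta> B"
    and "\<delta> < \<eta>" and sep: "\<And>a b. a \<in> A \<Longrightarrow> b \<in> B \<Longrightarrow> \<eta> \<le> d a b"
  shows "\<pi>\<^sub>1 \<union> \<pi>\<^sub>2 \<in> fine_packings M d D \<delta> (A \<union> B)"
proof -
  have "snd p < d (fst p) (fst q)"
    if "p \<in> \<pi>\<^sub>1 \<union> \<pi>\<^sub>2" "q \<in> \<pi>\<^sub>1 \<union> \<pi>\<^sub>2" "p \<noteq> q" for p q
  proof (cases "p \<in> \<pi>\<^sub>1 \<longleftrightarrow> q \<in> \<pi>\<^sub>1")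
    case True
    then have "packing M d \<pi>\<^sub>1 \<and> p \<in> \<pi>\<^sub>1 \<and> q \<in> \<pi>\<^sub>1 \<or> packing M d \<pi>\<^sub>2 \<and> p \<in> \<pi>\<^sub>2 \<and> q \<in> \<pi>\<^sub>2"
      using that(1,2) assms(1,2) fine_packings_packing by blast
    then show ?thesis using that(3) unfolding packing_def by blast
  next
    case False
    then have "\<eta> \<le> d (fst p) (fst q)"
      using that(1,2) fine_packingsD(2)[OF assms(1)] fine_packingsD(2)[OF assms(2)] sep commute
      by (metis Un_iff)
    moreover have "snd p \<le> \<delta>"
      using that(1) fine_packingsD(5)[OF assms(1)] fine_packingsD(5)[OF assms(2)] by blast
    ultimately show ?thesis using \<open>\<delta> < \<eta>\<close> by linarith
  qed
  then show ?thesis using assms(1,2) unfolding fine_packings_def packing_def by auto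
qed

lemma fine_packing_sup_add_separated:
  assumes "0 < \<eta>" "\<delta> < \<eta>" and sep: "\<And>a b. a \<in> A \<Longrightarrow> b \<in> B \<Longrightarrow> \<eta> \<le> d a b"
  shows "fine_packing_sup M d g D \<delta> A + fine_packing_sup M d g D \<delta> B \<le> fine_packing_sup M d g D \<delta> (A \<union> B)"
  unfolding fine_packing_sup_def[of M d g D \<delta> A] fine_packing_sup_def[of M d g D \<delta> B]
proof (rule SUP_add_SUP_le_ennreal)
  fix \<pi>\<^sub>1 \<pi>\<^sub>2 assume \<pi>: "\<pi>\<^sub>1 \<in> fine_packings M d D \<delta> A" "\<pi>\<^sub>2 \<in> fine_packings M d D \<delta> B"
  have "\<pi>\<^sub>1 \<inter> \<pi>\<^sub>2 = {}"
  proof (rule ccontr)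
    assume "\<pi>\<^sub>1 \<inter> \<pi>\<^sub>2 \<noteq> {}"
    then obtain p where "p \<in> \<pi>\<^sub>1" "p \<in> \<pi>\<^sub>2" by blast
    then have "fst p \<in> A" "fst p \<in> B" "fst p \<in> M"
      using fine_packingsD \<pi> by blast+
    then show False using sep[of "fst p" "fst p"] \<open>0 < \<eta>\<close> by simp
  qed
  then have "packing_sum g \<pi>\<^sub>1 + packing_sum g \<pi>\<^sub>2 = packing_sum g (\<pi>\<^sub>1 \<union> \<pi>\<^sub>2)"
    by (simp add: packing_sum_Un_disjoint)
  also have "\<dots> \<le> fine_packing_sup M d g D \<delta> (A \<union> B)"
    by (intro packing_sum_le_fine_packing_sup packing_Un_separated[OF \<pi> \<open>\<delta> < \<eta>\<close> sep])
  finally show "packing_sum g \<pi>\<^sub>1 + packing_sum g \<pi>\<^sub>2 \<le> fine_packing_sup M d g D \<delta> (A \<union> B)" .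
qed (use empty_in_fine_packings in blast)+

lemma packing_premeasure_add_separated:
  assumes "0 < \<eta>" and sep: "\<And>a b. a \<in> A \<Longrightarrow> b \<in> B \<Longrightarrow> \<eta> \<le> d a b"
  shows "packing_premeasure M d g D A + packing_premeasure M d g D B \<le> packing_premeasure M d g D (A \<union> B)"
proof (rule packing_premeasure_geI[OF \<open>0 < \<eta>\<close>])
  fix \<delta> :: real assume "0 < \<delta>" "\<delta> < \<eta>"
  have "packing_premeasure M d g D A + packing_premeasure M d g D B
        \<le> fine_packing_sup M d g D \<delta> A + fine_packing_sup M d g D \<delta> B"
    using packing_premeasure_le_fine_packing_sup[OF \<open>0 < \<delta>\<close>] by (intro add_mono)
  also have "\<dots> \<le> fine_packing_sup M d g D \<delta> (A \<union> B)"
    using fine_packing_sup_add_separated assms \<open>\<delta> < \<eta>\<close> by blast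
  finally show "packing_premeasure M d g D A + packing_premeasure M d g D B
        \<le> fine_packing_sup M d g D \<delta> (A \<union> B)" .
qed

lemma packing_measure_add_separated:
  assumes "0 < \<eta>" and sep: "\<And>a b. a \<in> A \<Longrightarrow> b \<in> B \<Longrightarrow> \<eta> \<le> d a b"
  shows "packing_measure M d g D A + packing_measure M d g D B \<le> packing_measure M d g D (A \<union> B)"
  unfolding packing_measure_def[of M d g D "A \<union> B"]
proof (rule INF_greatest, clarify)
  fix C :: "nat \<Rightarrow> 'a set" assume C: "\<forall>n. C n \<subseteq> M" "A \<union> B \<subseteq> (\<Union>n. C n)"
  let ?Q = "packing_premeasure M d g D"
  have "packing_measure M d g D A + packing_measure M d g D B
        \<le> (\<Sum>n. ?Q (C n \<inter> A)) + (\<Sum>n. ?Q (C n \<inter> B))"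
    unfolding packing_measure_def by (intro add_mono INF_lower) (use C in auto)
  also have "\<dots> = (\<Sum>n. ?Q (C n \<inter> A) + ?Q (C n \<inter> B))" by (simp add: suminf_add)
  also have "\<dots> \<le> (\<Sum>n. ?Q (C n))"
  proof (intro suminf_le allI)
    fix n
    have "?Q (C n \<inter> A) + ?Q (C n \<inter> B) \<le> ?Q ((C n \<inter> A) \<union> (C n \<inter> B))"
      by (rule packing_premeasure_add_separated[OF \<open>0 < \<eta>\<close>]) (use sep in auto)
    also have "\<dots> \<le> ?Q (C n)" by (rule packing_premeasure_mono) auto
    finally show "?Q (C n \<inter> A) + ?Q (C n \<inter> B) \<le> ?Q (C n)" .
  qed auto
  finally show "packing_measure M d g D A + packing_measure M d g D B \<le> (\<Sum>n. ?Q (C n))" .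
qed

lemma packing_measure_sum_separated:
  fixes n :: nat
  assumes "\<And>n. 0 < \<eta> n"
    and sep: "\<And>k n x y. k < n \<Longrightarrow> x \<in> B k \<Longrightarrow> y \<in> B n \<Longrightarrow> \<eta> n \<le> d x y"
  shows "(\<Sum>k<n. packing_measure M d g D (B k)) \<le> packing_measure M d g D (\<Union>k<n. B k)"
proof (induction n)
  case (Suc n)
  have "(\<Sum>k<Suc n. packing_measure M d g D (B k))
        \<le> packing_measure M d g D (\<Union>k<n. B k) + packing_measure M d g D (B n)"
    using Suc by (simp add: add_right_mono)
  also have "\<dots> \<le> packing_measure M d g D ((\<Union>k<n. B k) \<union> B n)"
    by (rule packing_measure_add_separated[OF assms(1)]) (use sep in blast)
  finally show ?case by (simp add: lessThan_Suc Un_commute)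
qed simp

lemma packing_measure_suminf_le_twice:
  assumes "\<And>k. R k \<subseteq> T" "\<And>j. 0 < \<eta> j"
    and sep: "\<And>i j x y. i + 2 \<le> j \<Longrightarrow> x \<in> R i \<Longrightarrow> y \<in> R j \<Longrightarrow> \<eta> j \<le> d x y"
  shows "(\<Sum>k. packing_measure M d g D (R k)) \<le> packing_measure M d g D T + packing_measure M d g D T"
proof -
  let ?P = "packing_measure M d g D"
  \<comment> \<open>Every other layer is uniformly separated from the earlier ones.\<close>
  have alternate: "(\<Sum>k<n. ?P (R (2*k + r))) \<le> ?P T" for n r
  proof -
    have "(\<Sum>k<n. ?P (R (2*k + r))) \<le> ?P (\<Union>k<n. R (2*k + r))"
    proof (rule packing_measure_sum_separated[where \<eta> = "\<lambda>n. \<eta> (2*n + r)"])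
      fix k n x y assume "k < n" "x \<in> R (2*k + r)" "y \<in> R (2*n + r)"
      then show "\<eta> (2*n + r) \<le> d x y" by (intro sep[of "2*k + r"]) auto
    qed (rule assms(2))
    also have "\<dots> \<le> ?P T" by (rule packing_measure_mono) (use assms(1) in auto)
    finally show ?thesis .
  qed
  have split: "(\<Sum>k<2*n. f k) = (\<Sum>k<n. f (2*k + 0)) + (\<Sum>k<n. f (2*k + 1))"
    for n and f :: "nat \<Rightarrow> ennreal"
    by (induction n) (auto simp: algebra_simps)
  show ?thesis
    unfolding suminf_eq_SUP
  proof (rule SUP_least)
    fix n
    have "(\<Sum>k<n. ?P (R k)) \<le> (\<Sum>k<2*n. ?P (R k))" by (rule sum_mono2) auto
    also have "\<dots> \<le> ?P T + ?P T" unfolding split by (intro add_mono alternate)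
    finally show "(\<Sum>k<n. ?P (R k)) \<le> ?P T + ?P T" .
  qed
qed

lemma closedin_dist_ge:
  assumes "closedin mtopology C" "x \<in> M - C"
  obtains r where "0 < r" "\<And>c. c \<in> C \<Longrightarrow> r \<le> d x c"
proof -
  obtain r where "0 < r" "disjnt C (mball x r)"
    using assms unfolding closedin_metric by blast
  moreover have "C \<subseteq> M" using assms(1) closedin_subset by force
  ultimately show thesis using assms(2) by (intro that[of r]) (auto simp: disjnt_iff not_less)
qed

lemma Diff_closedin_subset_far_parts:
  assumes "closedin mtopology C" "T \<subseteq> M"
  shows "T - C \<subseteq> far_part d C T N \<union> (\<Union>k. far_part d C T (Suc (k + N)) - far_part d C T (k + N))"
proof
  fix x assume x: "x \<in> T - C"
  obtain r where "0 < r" "\<And>c. c \<in> C \<Longrightarrow> r \<le> d x c"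
    using closedin_dist_ge[OF assms(1)] x assms(2) by blast
  moreover obtain n where "inverse (real (Suc n)) < r" using reals_Archimedean \<open>0 < r\<close> by blast
  moreover have "1 / real (Suc (max n N)) \<le> 1 / real (Suc n)" by (intro divide_left_mono) auto
  ultimately have "x \<in> far_part d C T (max n N)" using x by (force simp: far_part_def inverse_eq_divide)
  then have "x \<in> far_part d C T N \<union> (\<Union>k\<in>{N..<max n N}. far_part d C T (Suc k) - far_part d C T k)"
    using subset_Un_Diff_steps[of N "max n N" "far_part d C T"] by (simp add: subset_iff)
  then show "x \<in> far_part d C T N \<union> (\<Union>k. far_part d C T (Suc (k + N)) - far_part d C T (k + N))"
  proof (elim UnE UN_E)
    fix k assume "k \<in> {N..<max n N}" "x \<in> far_part d C T (Suc k) - far_part d C T k"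
    then have "x \<in> far_part d C T (Suc (k - N + N)) - far_part d C T (k - N + N)" by simp
    then show ?thesis by blast
  qed simp
qed

lemma far_part_steps_separated:
  assumes "C \<subseteq> M" "T \<subseteq> M" "i + 2 \<le> j"
    and "x \<in> far_part d C T (Suc i)" "y \<in> T - C - far_part d C T j"
  shows "1 / (real (Suc j))\<^sup>2 \<le> d x y"
proof -
  obtain c where c: "c \<in> C" "d y c < 1 / real (Suc j)"
    using assms(5) by (force simp: far_part_def)
  have "1 / real (Suc (Suc i)) \<le> d x c" using assms(4) c(1) by (auto simp: far_part_def)
  moreover have "d x c \<le> d x y + d y c"
    using assms c(1) by (intro triangle) (auto simp: far_part_def)
  ultimately show ?thesis using inverse_Suc_sq_le_diff[OF assms(3)] c(2) by linarith
qed

lemma packing_measure_closedin_split: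
  assumes "closedin mtopology C" "T \<subseteq> M"
  shows "packing_measure M d g D (T \<inter> C) + packing_measure M d g D (T - C) \<le> packing_measure M d g D T"
proof (rule ennreal_le_epsilon)
  fix e :: real assume PT: "packing_measure M d g D T < top" and "0 < e"
  let ?P = "packing_measure M d g D" and ?L = "far_part d C T"
  define R where "R k = ?L (Suc k) - ?L k" for k
  have CM: "C \<subseteq> M" using assms(1) closedin_subset by force
  have inner: "?P (T \<inter> C) + ?P (?L k) \<le> ?P T" for k
  proof -
    have "?P (T \<inter> C) + ?P (?L k) \<le> ?P ((T \<inter> C) \<union> ?L k)"
      by (rule packing_measure_add_separated[of "1 / real (Suc k)"]) (auto simp: far_part_def commute)
    also have "\<dots> \<le> ?P T" by (rule packing_measure_mono) (auto simp: far_part_def)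
    finally show ?thesis .
  qed
  have "(\<Sum>k. ?P (R k)) \<le> ?P T + ?P T"
  proof (rule packing_measure_suminf_le_twice)
    fix i j x y assume "i + 2 \<le> j" "x \<in> R i" "y \<in> R j"
    then show "1 / (real (Suc j))\<^sup>2 \<le> d x y"
      by (intro far_part_steps_separated[OF CM assms(2)]) (auto simp: R_def far_part_def)
  qed (auto simp: R_def far_part_def)
  also have "\<dots> < top" using PT by simp
  finally obtain N where N: "(\<Sum>k. ?P (R (k + N))) \<le> ennreal e"
    using ennreal_suminf_tail_le \<open>0 < e\<close> by blast
  have "?P (T - C) \<le> ?P (?L N \<union> (\<Union>k. R (k + N)))"
    using Diff_closedin_subset_far_parts[OF assms] by (intro packing_measure_mono) (simp add: R_def)
  also have "\<dots> \<le> ?P (?L N) + (\<Sum>k. ?P (R (k + N)))"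
    using assms(2) by (intro order.trans[OF packing_measure_subadditive] add_left_mono
        packing_measure_countably_subadditive) (auto simp: far_part_def R_def)
  finally have "?P (T \<inter> C) + ?P (T - C) \<le> ?P (T \<inter> C) + ?P (?L N) + ennreal e"
    using N by (simp add: add.assoc add_left_mono order.trans)
  also have "\<dots> \<le> ?P T + ennreal e" using inner by (rule add_right_mono)
  finally show "?P (T \<inter> C) + ?P (T - C) \<le> ?P T + ennreal e" .
qed

lemma packing_move_centres:
  assumes "packing M d \<pi>" "\<And>p. p \<in> \<pi> \<Longrightarrow> a p \<in> M"
    and margin: "\<And>p q. p \<in> \<pi> \<Longrightarrow> q \<in> \<pi> \<Longrightarrow> p \<noteq> q \<Longrightarrow> snd p + m \<le> d (fst p) (fst q)"
    and close: "\<And>p. p \<in> \<pi> \<Longrightarrow> d (fst p) (a p) < m / 2"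
  shows "packing M d ((\<lambda>p. (a p, snd p)) ` \<pi>)" "inj_on (\<lambda>p. (a p, snd p)) \<pi>"
proof -
  have moved: "snd p < d (a p) (a q)" if "p \<in> \<pi>" "q \<in> \<pi>" "p \<noteq> q" for p q
  proof -
    have "fst p \<in> M" "fst q \<in> M" using that assms(1) by (auto simp: packing_def)
    then have "d (fst p) (fst q) \<le> d (fst p) (a p) + d (a p) (a q) + d (a q) (fst q)"
      using assms(2) that(1,2) triangle by (smt (verit))
    then show ?thesis
      using margin[OF that] close[OF that(1)] close[OF that(2)] commute[of "a q" "fst q"] by linarith
  qed
  show "inj_on (\<lambda>p. (a p, snd p)) \<pi>"
  proof (rule inj_onI, rule ccontr)
    fix p q assume "p \<in> \<pi>" "q \<in> \<pi>" "(a p, snd p) = (a q, snd q)" "p \<noteq> q"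
    then show False using moved[of p q] assms(1,2) by (auto simp: packing_def)
  qed
  show "packing M d ((\<lambda>p. (a p, snd p)) ` \<pi>)"
    unfolding packing_def
  proof (intro conjI ballI impI)
    fix p' assume "p' \<in> (\<lambda>p. (a p, snd p)) ` \<pi>"
    then show "fst p' \<in> M" "0 < snd p'" using assms(1,2) by (auto simp: packing_def)
  next
    fix p' q' assume "p' \<in> (\<lambda>p. (a p, snd p)) ` \<pi>" "q' \<in> (\<lambda>p. (a p, snd p)) ` \<pi>" "p' \<noteq> q'"
    then obtain p q where "p \<in> \<pi>" "q \<in> \<pi>" "p' = (a p, snd p)" "q' = (a q, snd q)" "p \<noteq> q"
      by blast
    then show "snd p' < d (fst p') (fst q')" using moved by simp
  qed
qed

lemma fine_packing_sup_closure:
  assumes "A \<subseteq> M"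
  shows "fine_packing_sup M d g D \<delta> (mtopology closure_of A) \<le> fine_packing_sup M d g D \<delta> A"
  unfolding fine_packing_sup_def[of M d g D \<delta> "mtopology closure_of A"]
proof (rule SUP_least)
  fix \<pi> assume \<pi>: "\<pi> \<in> fine_packings M d D \<delta> (mtopology closure_of A)"
  have "1 * packing_sum g \<pi> \<le> fine_packing_sup M d g D \<delta> A"
  proof (rule mult_packing_sum_leI)
    fix F assume F: "finite F" "F \<subseteq> \<pi>"
    have pk: "packing M d F" using fine_packings_packing[OF fine_packings_subset[OF \<pi> F(2)]] .
    \<comment> \<open>A finite packing has a uniform margin, so its centres may be moved into \<open>A\<close>.\<close>
    obtain m where "0 < m" and m: "\<And>p q. p \<in> F \<Longrightarrow> q \<in> F \<Longrightarrow> p \<noteq> q \<Longrightarrow> m \<le> d (fst p) (fst q) - snd p"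
      using finite_positive_margin[OF F(1), of "\<lambda>p q. d (fst p) (fst q) - snd p"] pk
      unfolding packing_def by auto
    have "\<forall>p\<in>F. \<exists>y. y \<in> A \<and> d (fst p) y < m / 2"
    proof
      fix p assume "p \<in> F"
      then have "fst p \<in> mtopology closure_of A" using fine_packingsD(2)[OF \<pi>] F(2) by blast
      moreover have "0 < m / 2" using \<open>0 < m\<close> by simp
      ultimately show "\<exists>y. y \<in> A \<and> d (fst p) y < m / 2"
        unfolding metric_closure_of in_mball by blast
    qed
    from bchoice[OF this] obtain a where a: "\<forall>p\<in>F. a p \<in> A \<and> d (fst p) (a p) < m / 2"
      by (elim exE)
    let ?\<pi>' = "(\<lambda>p. (a p, snd p)) ` F"
    have "a p \<in> M" "d (fst p) (a p) < m / 2" if "p \<in> F" for p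
      using a that assms by auto
    moreover have "snd p + m \<le> d (fst p) (fst q)" if "p \<in> F" "q \<in> F" "p \<noteq> q" for p q
      using m[OF that] by simp
    ultimately have moved: "packing M d ?\<pi>'" "inj_on (\<lambda>p. (a p, snd p)) F"
      using packing_move_centres[OF pk, of a m] by blast+
    have "?\<pi>' \<in> fine_packings M d D \<delta> A"
      using moved(1) a F(2) fine_packingsD(4,5)[OF \<pi>] by (auto simp: fine_packings_def)
    moreover have "(\<Sum>p\<in>F. ennreal (g (snd p))) = packing_sum g ?\<pi>'"
      using F(1) moved(2) by (simp add: packing_sum_def sum.reindex)
    ultimately show "1 * (\<Sum>p\<in>F. ennreal (g (snd p))) \<le> fine_packing_sup M d g D \<delta> A"
      by (simp add: packing_sum_le_fine_packing_sup)
  qed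
  then show "packing_sum g \<pi> \<le> fine_packing_sup M d g D \<delta> A" by simp
qed

lemma packing_premeasure_closure:
  "A \<subseteq> M \<Longrightarrow> packing_premeasure M d g D (mtopology closure_of A) \<le> packing_premeasure M d g D A"
  unfolding packing_premeasure_eq_INF_fine_packing_sup by (intro INF_mono) (auto intro: fine_packing_sup_closure)

lemma packing_measure_closedin_steps:
  assumes "\<And>n. closedin mtopology (F n)" "\<And>n. F n \<subseteq> F (Suc n)"
  shows "packing_measure M d g D (F 0) + (\<Sum>n<N. packing_measure M d g D (F (Suc n) - F n))
           \<le> packing_measure M d g D (F N)"
proof (induction N)
  case (Suc N)
  let ?P = "packing_measure M d g D"
  have "?P (F 0) + (\<Sum>n<Suc N. ?P (F (Suc n) - F n)) \<le> ?P (F N) + ?P (F (Suc N) - F N)"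
    using Suc by (simp add: add.assoc[symmetric] add_right_mono)
  also have "\<dots> = ?P (F (Suc N) \<inter> F N) + ?P (F (Suc N) - F N)"
    using assms(2)[of N] by (simp add: Int_absorb1)
  also have "\<dots> \<le> ?P (F (Suc N))"
    using assms(1) closedin_subset[of mtopology "F (Suc N)"]
    by (intro packing_measure_closedin_split) auto
  finally show ?case .
qed simp

lemma packing_measure_UN_le_SUP_premeasure:
  assumes "\<And>n. A n \<subseteq> M" "incseq A"
  shows "packing_measure M d g D (\<Union>n. A n) \<le> (SUP n. packing_premeasure M d g D (A n))"
proof -
  let ?P = "packing_measure M d g D" and ?Q = "packing_premeasure M d g D"
  define F where "F n = mtopology closure_of A n" for n
  have FM: "F n \<subseteq> M" for n unfolding F_def using closure_of_subset_topspace[of mtopology] by simp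
  have F_mono: "F n \<subseteq> F (Suc n)" for n
    unfolding F_def by (intro closure_of_mono incseq_SucD[OF assms(2)])
  have "(\<Union>n. A n) \<subseteq> F 0 \<union> (\<Union>n. F (Suc n) - F n)"
  proof
    fix x assume "x \<in> (\<Union>n. A n)"
    then obtain n where "x \<in> A n" by blast
    then have "x \<in> F n" using closure_of_subset[of "A n" mtopology] assms(1) by (auto simp: F_def)
    then show "x \<in> F 0 \<union> (\<Union>n. F (Suc n) - F n)" using subset_Un_Diff_steps[of 0 n F] by auto
  qed
  then have "?P (\<Union>n. A n) \<le> ?P (F 0) + ?P (\<Union>n. F (Suc n) - F n)"
    using FM by (intro order.trans[OF packing_measure_mono packing_measure_subadditive]) auto
  also have "\<dots> \<le> ?P (F 0) + (\<Sum>n. ?P (F (Suc n) - F n))"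
    using FM by (intro add_left_mono packing_measure_countably_subadditive) auto
  also have "\<dots> = (SUP N. ?P (F 0) + (\<Sum>n<N. ?P (F (Suc n) - F n)))"
    by (simp add: suminf_eq_SUP ennreal_SUP_add_right)
  also have "\<dots> \<le> (SUP N. ?Q (A N))"
  proof (rule SUP_mono')
    fix N
    have "?P (F 0) + (\<Sum>n<N. ?P (F (Suc n) - F n)) \<le> ?P (F N)"
      using F_mono by (intro packing_measure_closedin_steps) (simp_all add: F_def)
    also have "\<dots> \<le> ?Q (F N)" by (rule packing_measure_le_premeasure[OF FM])
    also have "\<dots> \<le> ?Q (A N)" unfolding F_def by (rule packing_premeasure_closure[OF assms(1)])
    finally show "?P (F 0) + (\<Sum>n<N. ?P (F (Suc n) - F n)) \<le> ?Q (A N)" .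
  qed
  finally show ?thesis .
qed

end

section \<open>Packings of products\<close>

lemma gap_less_dist:
  assumes "ereal t < gap d G" "y \<in> G" "y' \<in> G" "y \<noteq> y'"
  shows "t < d y y'"
proof -
  have "gap d G \<le> ereal (d y y')"
    unfolding gap_def by (rule INF_lower2[of "(y, y')"]) (use assms in auto)
  then have "ereal t < ereal (d y y')" using assms(1) by (rule order.strict_trans2[rotated])
  then show ?thesis by simp
qed

lemma gap_antimono: "G' \<subseteq> G \<Longrightarrow> gap d G \<le> gap d G'"
  unfolding gap_def by (rule INF_superset_mono) auto

lemma capacity_witness:
  assumes "ennreal r < capacity d t F * ennreal c" "0 < c"
  obtains G where "finite G" "G \<subseteq> F" "ereal t < gap d G" "ennreal r \<le> of_nat (card G) * ennreal c"
proof -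
  have "capacity d t F * ennreal c = (SUP G\<in>{G. G \<subseteq> F \<and> gap d G > ereal t}.
      (if finite G then of_nat (card G) else \<infinity>) * ennreal c)"
    unfolding capacity_def by (rule SUP_mult_right_ennreal)
  with assms(1) obtain G where G: "G \<subseteq> F" "gap d G > ereal t"
      "ennreal r < (if finite G then of_nat (card G) else \<infinity>) * ennreal c"
    by (auto simp: less_SUP_iff)
  show thesis
  proof (cases "finite G")
    case True then show ?thesis using G by (intro that[of G]) auto
  next
    case False
    obtain n :: nat where "r / c \<le> real n" using real_arch_simple by blast
    moreover obtain G' where G': "G' \<subseteq> G" "finite G'" "card G' = n"
      using infinite_arbitrarily_large[OF False] by blast
    ultimately have "ennreal r \<le> of_nat (card G') * ennreal c"
      using assms(2) by (simp add: ennreal_of_nat_eq_real_of_nat field_simps flip: ennreal_mult)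
    then show ?thesis
      using G G' gap_antimono[of G' G d] by (intro that[of G']) auto
  qed
qed

definition product_packing :: "('a \<times> real) set \<Rightarrow> ('a \<times> real \<Rightarrow> 'b set) \<Rightarrow> (('a \<times> 'b) \<times> real) set" where
  "product_packing \<pi> G = (\<lambda>(p, y). ((fst p, y), snd p)) ` (SIGMA p:\<pi>. G p)"

lemma packing_product_packing:
  assumes "packing X dX \<pi>"
    and "\<And>p. p \<in> \<pi> \<Longrightarrow> G p \<subseteq> Y" "\<And>p. p \<in> \<pi> \<Longrightarrow> ereal (snd p) < gap dY (G p)"
  shows "packing (X \<times> Y) (max_dist dX dY) (product_packing \<pi> G)"
proof -
  have "snd p < max_dist dX dY (fst p, y) (fst p', y')"
    if "p \<in> \<pi>" "y \<in> G p" "p' \<in> \<pi>" "y' \<in> G p'" "((fst p, y), snd p) \<noteq> ((fst p', y'), snd p')"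
    for p p' y y'
  proof (cases "p = p'")
    case True
    then have "snd p < dY y y'" using that assms(3) gap_less_dist by fastforce
    then show ?thesis by (simp add: max_dist_def)
  next
    case False
    then have "snd p < dX (fst p) (fst p')" using that assms(1) by (auto simp: packing_def)
    then show ?thesis by (simp add: max_dist_def)
  qed
  then show ?thesis using assms(1,2) unfolding packing_def product_packing_def by fastforce
qed

lemma product_packing_in_fine_packings:
  assumes "\<pi> \<in> fine_packings X dX D \<delta> A" "E \<subseteq> X \<times> Y"
    and "\<And>p. p \<in> \<pi> \<Longrightarrow> G p \<subseteq> fiber E (fst p)" "\<And>p. p \<in> \<pi> \<Longrightarrow> ereal (snd p) < gap dY (G p)"
  shows "product_packing \<pi> G \<in> fine_packings (X \<times> Y) (max_dist dX dY) D \<delta> E"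
proof -
  have "packing (X \<times> Y) (max_dist dX dY) (product_packing \<pi> G)"
    using assms(2,3) by (intro packing_product_packing[OF fine_packings_packing[OF assms(1)] _ assms(4)])
      (auto simp: fiber_def)
  moreover have "fst q \<in> E \<and> snd q \<in> D \<and> snd q \<le> \<delta>" if q: "q \<in> product_packing \<pi> G" for q
  proof -
    obtain p y where "p \<in> \<pi>" "y \<in> G p" "q = ((fst p, y), snd p)" using q by (auto simp: product_packing_def)
    then show ?thesis using assms(3) fine_packingsD(4,5)[OF assms(1)] by (fastforce simp: fiber_def)
  qed
  ultimately show ?thesis by (simp add: fine_packings_def image_subset_iff)
qed

lemma packing_sum_product_packing:
  assumes "finite \<pi>" "\<And>p. p \<in> \<pi> \<Longrightarrow> finite (G p)"
  shows "packing_sum f (product_packing \<pi> G) = (\<Sum>p\<in>\<pi>. of_nat (card (G p)) * ennreal (f (snd p)))"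
proof -
  define \<phi> where "\<phi> = (\<lambda>(p :: 'a \<times> real, y :: 'b). ((fst p, y), snd p))"
  have inj: "inj_on \<phi> (SIGMA p:\<pi>. G p)" by (auto simp: \<phi>_def inj_on_def)
  have "(\<Sum>p\<in>\<pi>. of_nat (card (G p)) * ennreal (f (snd p))) = (\<Sum>p\<in>\<pi>. \<Sum>y\<in>G p. ennreal (f (snd p)))"
    by simp
  also have "\<dots> = (\<Sum>(p, y)\<in>(SIGMA p:\<pi>. G p). ennreal (f (snd p)))"
    using assms by (intro sum.Sigma) auto
  also have "\<dots> = (\<Sum>q\<in>\<phi> ` (SIGMA p:\<pi>. G p). ennreal (f (snd q)))"
    unfolding sum.reindex[OF inj] by (simp add: \<phi>_def split_beta)
  also have "\<dots> = packing_sum f (product_packing \<pi> G)"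
    using assms by (simp add: packing_sum_def product_packing_def \<phi>_def)
  finally show ?thesis ..
qed

lemma fibre_witnesses:
  assumes "\<pi> \<in> fine_packings X dX D \<delta> A"
    and fibres: "\<And>x t. x \<in> A \<Longrightarrow> 0 < t \<Longrightarrow> t \<le> \<delta> \<Longrightarrow>
                   ennreal r < capacity dY t (fiber E x) * ennreal (g t)"
    and g: "\<And>t. 0 < t \<Longrightarrow> 0 < g t"
  obtains G where "\<forall>p\<in>\<pi>. finite (G p) \<and> G p \<subseteq> fiber E (fst p) \<and>
      ereal (snd p) < gap dY (G p) \<and> ennreal r \<le> of_nat (card (G p)) * ennreal (g (snd p))"
proof -
  have "\<forall>p\<in>\<pi>. \<exists>G. finite G \<and> G \<subseteq> fiber E (fst p) \<and>
      ereal (snd p) < gap dY G \<and> ennreal r \<le> of_nat (card G) * ennreal (g (snd p))"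
  proof
    fix p assume "p \<in> \<pi>"
    note p = fine_packingsD[OF assms(1) this]
    obtain G where "finite G" "G \<subseteq> fiber E (fst p)" "ereal (snd p) < gap dY G"
        "ennreal r \<le> of_nat (card G) * ennreal (g (snd p))"
      using capacity_witness[OF fibres[OF p(2,3,5)] g[OF p(3)]] .
    then show "\<exists>G. finite G \<and> G \<subseteq> fiber E (fst p) \<and>
      ereal (snd p) < gap dY G \<and> ennreal r \<le> of_nat (card G) * ennreal (g (snd p))"
      by blast
  qed
  from bchoice[OF this] show thesis using that by (elim exE)
qed

lemma fine_packing_sup_product_ge:
  assumes "E \<subseteq> X \<times> Y"
    and g: "\<And>t. 0 < t \<Longrightarrow> 0 < g t" and h: "\<And>t. 0 < t \<Longrightarrow> 0 \<le> h t"
    and fibres: "\<And>x t. x \<in> A \<Longrightarrow> 0 < t \<Longrightarrow> t \<le> \<delta> \<Longrightarrow>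
                   ennreal r < capacity dY t (fiber E x) * ennreal (g t)"
  shows "ennreal r * fine_packing_sup X dX h D \<delta> A
           \<le> fine_packing_sup (X \<times> Y) (max_dist dX dY) (\<lambda>t. g t * h t) D \<delta> E"
  unfolding fine_packing_sup_def[of X dX h D \<delta> A] SUP_mult_left_ennreal
proof (rule SUP_least)
  fix \<pi> assume \<pi>: "\<pi> \<in> fine_packings X dX D \<delta> A"
  show "ennreal r * packing_sum h \<pi> \<le> fine_packing_sup (X \<times> Y) (max_dist dX dY) (\<lambda>t. g t * h t) D \<delta> E"
  proof (rule mult_packing_sum_leI)
    fix F assume F: "finite F" "F \<subseteq> \<pi>"
    note p = fine_packingsD[OF \<pi> subsetD[OF F(2)]]
    have F': "F \<in> fine_packings X dX D \<delta> A" using \<pi> F(2) by (rule fine_packings_subset)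
    obtain G where G: "\<forall>p\<in>F. finite (G p) \<and> G p \<subseteq> fiber E (fst p) \<and>
        ereal (snd p) < gap dY (G p) \<and> ennreal r \<le> of_nat (card (G p)) * ennreal (g (snd p))"
      using fibre_witnesses[OF F' fibres g] by blast
    have \<pi>': "product_packing F G \<in> fine_packings (X \<times> Y) (max_dist dX dY) D \<delta> E"
      using F' G assms(1) by (intro product_packing_in_fine_packings) auto
    have "ennreal r * (\<Sum>p\<in>F. ennreal (h (snd p)))
          \<le> (\<Sum>p\<in>F. of_nat (card (G p)) * ennreal (g (snd p) * h (snd p)))"
      unfolding sum_distrib_left
    proof (rule sum_mono)
      fix p assume "p \<in> F"
      then have "ennreal r * ennreal (h (snd p)) \<le> of_nat (card (G p)) * ennreal (g (snd p)) * ennreal (h (snd p))"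
        using G by (intro mult_right_mono) auto
      also have "\<dots> = of_nat (card (G p)) * ennreal (g (snd p) * h (snd p))"
        using g h p(3)[OF \<open>p \<in> F\<close>] by (simp add: ennreal_mult less_imp_le mult.assoc)
      finally show "ennreal r * ennreal (h (snd p)) \<le> of_nat (card (G p)) * ennreal (g (snd p) * h (snd p))" .
    qed
    also have "\<dots> = packing_sum (\<lambda>t. g t * h t) (product_packing F G)"
      using F(1) G by (simp add: packing_sum_product_packing)
    also have "\<dots> \<le> fine_packing_sup (X \<times> Y) (max_dist dX dY) (\<lambda>t. g t * h t) D \<delta> E"
      by (rule packing_sum_le_fine_packing_sup[OF \<pi>'])
    finally show "ennreal r * (\<Sum>p\<in>F. ennreal (h (snd p)))
      \<le> fine_packing_sup (X \<times> Y) (max_dist dX dY) (\<lambda>t. g t * h t) D \<delta> E" .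
  qed
qed

lemma packing_premeasure_product_ge:
  assumes "E \<subseteq> X \<times> Y" "0 < \<delta>\<^sub>0"
    and g: "\<And>t. 0 < t \<Longrightarrow> 0 < g t" and h: "\<And>t. 0 < t \<Longrightarrow> 0 \<le> h t"
    and fibres: "\<And>x t. x \<in> A \<Longrightarrow> 0 < t \<Longrightarrow> t \<le> \<delta>\<^sub>0 \<Longrightarrow>
                   ennreal r < capacity dY t (fiber E x) * ennreal (g t)"
  shows "ennreal r * packing_premeasure X dX h D A
           \<le> packing_premeasure (X \<times> Y) (max_dist dX dY) (\<lambda>t. g t * h t) D E"
  unfolding packing_premeasure_eq_INF_fine_packing_sup[of "X \<times> Y"]
proof (rule INF_greatest)
  fix \<delta> :: real assume "\<delta> \<in> {0<..}"
  then have "0 < min \<delta> \<delta>\<^sub>0" using \<open>0 < \<delta>\<^sub>0\<close> by simp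
  then have "ennreal r * packing_premeasure X dX h D A \<le> ennreal r * fine_packing_sup X dX h D (min \<delta> \<delta>\<^sub>0) A"
    by (intro mult_left_mono packing_premeasure_le_fine_packing_sup) auto
  also have "\<dots> \<le> fine_packing_sup (X \<times> Y) (max_dist dX dY) (\<lambda>t. g t * h t) D (min \<delta> \<delta>\<^sub>0) E"
    using assms(1) g h by (rule fine_packing_sup_product_ge) (use fibres in auto)
  also have "\<dots> \<le> fine_packing_sup (X \<times> Y) (max_dist dX dY) (\<lambda>t. g t * h t) D \<delta> E"
    by (rule fine_packing_sup_mono) auto
  finally show "ennreal r * packing_premeasure X dX h D A
      \<le> fine_packing_sup (X \<times> Y) (max_dist dX dY) (\<lambda>t. g t * h t) D \<delta> E" .
qed

lemma less_lower_box_eventually: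
  assumes "c < lower_box d g F"
  obtains n where "\<And>t. 0 < t \<Longrightarrow> t \<le> 1 / real (Suc n) \<Longrightarrow> c < capacity d t F * ennreal (g t)"
proof -
  have "\<forall>\<^sub>F t in at_right 0. c < capacity d t F * ennreal (g t)"
    using le_Liminf_iff[THEN iffD1, OF order_refl] assms unfolding lower_box_def by blast
  then obtain b where "0 < b" and b: "\<And>t. 0 < t \<Longrightarrow> t < b \<Longrightarrow> c < capacity d t F * ennreal (g t)"
    unfolding eventually_at_right_field by auto
  obtain n where "inverse (real (Suc n)) < b" using reals_Archimedean[OF \<open>0 < b\<close>] by blast
  then show thesis by (intro that[of n] b) (auto simp: inverse_eq_divide)
qed

definition large_fibres ::
  "'a set \<Rightarrow> ('a \<times> 'b) set \<Rightarrow> ('b \<Rightarrow> 'b \<Rightarrow> real) \<Rightarrow> (real \<Rightarrow> real) \<Rightarrow> ennreal \<Rightarrow> nat \<Rightarrow> 'a set" where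
  "large_fibres X E dY g c n = {x \<in> X. \<forall>t. 0 < t \<longrightarrow> t \<le> 1 / real (Suc n) \<longrightarrow>
      c < capacity dY t (fiber E x) * ennreal (g t)}"

lemma incseq_large_fibres: "incseq (large_fibres X E dY g c)"
proof (rule incseq_SucI)
  fix n
  have "1 / real (Suc (Suc n)) \<le> 1 / real (Suc n)" by (intro divide_left_mono) auto
  then show "large_fibres X E dY g c n \<subseteq> large_fibres X E dY g c (Suc n)"
    unfolding large_fibres_def by (auto dest: order.trans)
qed

lemma subset_UN_large_fibres:
  assumes "\<And>x. x \<in> X \<Longrightarrow> c < lower_box dY g (fiber E x)"
  shows "X \<subseteq> (\<Union>n. large_fibres X E dY g c n)"
proof
  fix x assume "x \<in> X"
  then obtain n where "\<And>t. 0 < t \<Longrightarrow> t \<le> 1 / real (Suc n) \<Longrightarrow> c < capacity dY t (fiber E x) * ennreal (g t)"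
    using less_lower_box_eventually[OF assms] by blast
  then show "x \<in> (\<Union>n. large_fibres X E dY g c n)" using \<open>x \<in> X\<close> by (auto simp: large_fibres_def)
qed

lemma packing_measure_mult_le_product:
  assumes "Metric_space X dX" "E \<subseteq> X \<times> Y"
    and g: "\<And>t. 0 < t \<Longrightarrow> 0 < g t" and h: "\<And>t. 0 < t \<Longrightarrow> 0 \<le> h t"
    and fibres: "\<And>x. x \<in> X \<Longrightarrow> c < lower_box dY g (fiber E x)"
  shows "packing_measure X dX h D X * c \<le> packing_premeasure (X \<times> Y) (max_dist dX dY) (\<lambda>t. g t * h t) D E"
proof (cases "X = {}")
  case False
  let ?A = "large_fibres X E dY g c" and ?Q = "packing_premeasure X dX h D"
  obtain x where "x \<in> X" using False by blast
  then have "c < top" using fibres order.strict_trans2 top_greatest by metis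
  then obtain r where r: "c = ennreal r" by (cases c) auto
  have "packing_measure X dX h D X \<le> packing_measure X dX h D (\<Union>n. ?A n)"
    using subset_UN_large_fibres[OF fibres] by (rule packing_measure_mono)
  also have "\<dots> \<le> (SUP n. ?Q (?A n))"
    by (rule Metric_space.packing_measure_UN_le_SUP_premeasure[OF assms(1) _ incseq_large_fibres])
      (auto simp: large_fibres_def)
  finally have "packing_measure X dX h D X * c \<le> (SUP n. ?Q (?A n) * c)"
    unfolding SUP_mult_right_ennreal[symmetric] by (rule mult_right_mono) simp
  also have "\<dots> \<le> packing_premeasure (X \<times> Y) (max_dist dX dY) (\<lambda>t. g t * h t) D E"
  proof (rule SUP_least)
    fix n
    show "?Q (?A n) * c \<le> packing_premeasure (X \<times> Y) (max_dist dX dY) (\<lambda>t. g t * h t) D E"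
      unfolding r mult.commute[of _ "ennreal r"]
      by (rule packing_premeasure_product_ge[OF assms(2) _ g h, of "1 / real (Suc n)"])
         (auto simp: large_fibres_def r)
  qed
  finally show ?thesis .
qed simp

lemma ennreal_mult_le_of_less:
  fixes a b I :: ennreal
  assumes "\<And>c. c < I \<Longrightarrow> a * c \<le> b"
  shows "a * I \<le> b"
proof -
  have "a * I = (SUP c\<in>{..<I}. a * c)"
    using SUP_mult_left_ennreal[of a id "{..<I}"] by simp
  also have "\<dots> \<le> b" using assms by (auto intro: SUP_least)
  finally show ?thesis .
qed

theorem lemma3p1:
  fixes X :: "'a set" and dX :: "'a \<Rightarrow> 'a \<Rightarrow> real"
    and Y :: "'b set" and dY :: "'b \<Rightarrow> 'b \<Rightarrow> real"
    and D :: "real set" and g h :: "real \<Rightarrow> real" and E :: "('a \<times> 'b) set"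
  assumes "Metric_space X dX" and "Metric_space Y dY"
    and "scale D" and "hausdorff_function g" and "hausdorff_function h"
    and "E \<subseteq> X \<times> Y"
  shows "packing_premeasure (X \<times> Y) (max_dist dX dY) (\<lambda>t. g t * h t) D E
           \<ge> packing_measure X dX h D X * (INF x \<in> X. lower_box dY g (fiber E x))"
proof (rule ennreal_mult_le_of_less)
  have g: "\<And>t. 0 < t \<Longrightarrow> 0 < g t" and h: "\<And>t. 0 < t \<Longrightarrow> 0 \<le> h t"
    using assms(4,5) by (auto simp: hausdorff_function_def less_imp_le)
  fix c assume "c < (INF x \<in> X. lower_box dY g (fiber E x))"
  then show "packing_measure X dX h D X * c \<le> packing_premeasure (X \<times> Y) (max_dist dX dY) (\<lambda>t. g t * h t) D E"
    by (intro packing_measure_mult_le_product[OF assms(1,6)] g h) (auto intro: less_INF_D)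
qed

end
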